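(* Consider the two matrix ODEs \[ \text{(A)}\quad \dot E=-G_\varepsilon(E)+\langle G_\varepsilon(E),E\rangle E, \] \[ \text{(B)}\quad \dot Y=-P_YR_\varepsilon(E)+\langle P_YR_\varepsilon(E),E\rangle Y,\qquad E=\Pi_{\mathcal{S}}Y . \] 1. Let $E_\star\in\mathcal{E}_1$ be a stationary point of (A). Assume that $\lambda_k$ and $\lambda_{k+1}$ of $L(W+\varepsilon E_\star)$ are simple, that $G_\varepsilon(E_\star)\neq0$, and that $R_\varepsilon(E_\star)$ has rank $4$. Then there is a symmetric matrix $Y_\star\in\mathcal{M}_4$ with $E_\star=\Pi_{\mathcal{S}}Y_\star$ that is a stationary point of (B). 2. Conversely, let $Y_\star\in\mathcal{M}_4$ be a symmetric stationary point of (B), and set $E_\star=\Pi_{\mathcal{S}}Y_\star$ and $R_\star=R_\varepsilon(E_\star)$. Assume that $\|E_\star\|_F=1$, that $\lambda_k$ and $\lambda_{k+1}$ of $L(W+\varepsilon E_\star)$ are simple, that $R_\star$ has rank $4$, and that $P_{Y_\star}R_\star\neq0$. Then: - $P_{Y_\star}R_\star=R_\star$; - $Y_\star$ is a nonzero real multiple of $R_\star$; - $E_\star$ is a stationary point of (A).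
   Context: A stationary point of an ODE $\dot X=f(X)$ is a point where $f(X)=0$. Let $\mathscr{E}\subseteq\{1,\dots,n\}^2$ be a symmetric edge set, and let $W\in\mathbb{R}^{n\times n}$ be symmetric, entrywise non-negative, with $w_{ij}=0$ for $(i,j)\notin\mathscr{E}$. Let $L(A)=\mathrm{diag}(A\mathbb{1})-A$ with $\mathbb{1}=(1,\dots,1)^T$. Eigenvalues are ordered $\lambda_1\le\dots\le\lambda_n$. The inner product is $\langle X,Y\rangle=\mathrm{trace}(X^TY)$ and $\|\cdot\|_F$ is the Frobenius norm. Let $\mathcal{S}=\{A: a_{ij}=0\ \forall (i,j)\notin\mathscr{E}\}$, with orthogonal projection $\Pi_{\mathcal{S}}$ (zeroing the entries outside $\mathscr{E}$). Let $\mathcal{E}=\mathcal{S}\cap\mathrm{Sym}(\mathbb{R}^{n\times n})$ and $\mathcal{E}_1=\{E\in\mathcal{E}:\|E\|_F=1\}$. Fix $k\in\{2,\dots,n-1\}$ and $\varepsilon>0$. For $E\in\mathcal{E}$ with $\lambda_k,\lambda_{k+1}$ of $L(W+\varepsilon E)$ simple, define the following objects. - $x$ and $y$ are unit eigenvectors for $\lambda_{k+1}$ and $\lambda_k$ respectively. - $z=x\bullet x-y\bullet y$, the componentwise product. - $R_\varepsilon(E)=\tfrac12(z\mathbb{1}^T+\mathbb{1}z^T)-xx^T+yy^T$. - $G_\varepsilon(E)=\Pi_{\mathcal{S}}R_\varepsilon(E)$. $\mathcal{M}_4$ is the manifold of real $n\times n$ matrices of rank exactly 4. $P_Y$ is the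 orthogonal projection onto $T_Y\mathcal{M}_4$. For symmetric $Y=USU^T$, with $U\in\mathbb{R}^{n\times4}$ having orthonormal columns and $S$ symmetric invertible, it is $P_YA=A-(I_n-UU^T)A(I_n-UU^T)$. *)

theory Defs
  imports "HOL-Analysis.Analysis"
begin

type_synonym 'n mat = "real^'n^'n"

definition symm :: "('n::finite) mat \<Rightarrow> bool" where
  "symm A \<longleftrightarrow> transpose A = A"

definition lap :: "('n::finite) mat \<Rightarrow> 'n mat" where
  "lap A = (\<chi> i j. (if i = j then (\<Sum>l\<in>UNIV. A $ i $ l) else 0) - A $ i $ j)"

definition finner :: "('n::finite) mat \<Rightarrow> 'n mat \<Rightarrow> real" where
  "finner X Y = trace (transpose X ** Y)"

definition fnorm :: "('n::finite) mat \<Rightarrow> real" where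
  "fnorm X = sqrt (finner X X)"

definition eigenspace :: "('n::finite) mat \<Rightarrow> real \<Rightarrow> (real^'n) set" where
  "eigenspace A \<mu> = {v. A *v v = \<mu> *\<^sub>R v}"

definition is_eigenvalue :: "('n::finite) mat \<Rightarrow> real \<Rightarrow> bool" where
  "is_eigenvalue A \<mu> \<longleftrightarrow> (\<exists>v. v \<noteq> 0 \<and> A *v v = \<mu> *\<^sub>R v)"

definition eig_count :: "('n::finite) mat \<Rightarrow> real \<Rightarrow> nat" where
  "eig_count A t = (\<Sum>\<mu>\<in>{\<mu>. is_eigenvalue A \<mu> \<and> \<mu> \<le> t}. dim (eigenspace A \<mu>))"

text \<open>lam A k = \<lambda>_k(A) (1-based), the k-th smallest eigenvalue counted with multiplicity.\<close>
definition lam :: "('n::finite) mat \<Rightarrow> nat \<Rightarrow> real" where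
  "lam A k = Inf {t. k \<le> eig_count A t}"

definition simple_eig :: "('n::finite) mat \<Rightarrow> nat \<Rightarrow> bool" where
  "simple_eig A k \<longleftrightarrow> dim (eigenspace A (lam A k)) = 1"

text \<open>A unit eigenvector (unique up to sign when the eigenvalue is simple).\<close>
definition unit_eigvec :: "('n::finite) mat \<Rightarrow> real \<Rightarrow> real^'n" where
  "unit_eigvec A \<mu> = (SOME v. norm v = 1 \<and> A *v v = \<mu> *\<^sub>R v)"

definition Rmat :: "('n::finite) mat \<Rightarrow> real \<Rightarrow> nat \<Rightarrow> 'n mat \<Rightarrow> 'n mat" where
  "Rmat W \<epsilon> k E =
    (let Lm = lap (W + \<epsilon> *\<^sub>R E);
         x = unit_eigvec Lm (lam Lm (k + 1));
         y = unit_eigvec Lm (lam Lm k);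
         z = (\<chi> i. x $ i * x $ i - y $ i * y $ i)
     in (\<chi> i j. (z $ i + z $ j) / 2 - x $ i * x $ j + y $ i * y $ j))"

definition projS :: "('n \<times> 'n) set \<Rightarrow> ('n::finite) mat \<Rightarrow> 'n mat" where
  "projS Ed A = (\<chi> i j. if (i, j) \<in> Ed then A $ i $ j else 0)"

definition Gmat :: "('n \<times> 'n) set \<Rightarrow> ('n::finite) mat \<Rightarrow> real \<Rightarrow> nat \<Rightarrow> 'n mat \<Rightarrow> 'n mat" where
  "Gmat Ed W \<epsilon> k E = projS Ed (Rmat W \<epsilon> k E)"

text \<open>Tangent-space projection P_Y for symmetric rank-4 Y = U S U^T.\<close>
definition PY :: "('n::finite) mat \<Rightarrow> 'n mat \<Rightarrow> 'n mat" where
  "PY Y A =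
    (let U = (SOME U :: real^4^'n. \<exists>S :: real^4^4.
                 transpose U ** U = mat 1 \<and> transpose S = S \<and> invertible S \<and>
                 Y = U ** S ** transpose U);
         Q = mat 1 - U ** transpose U
     in A - Q ** A ** Q)"

definition odeA :: "('n \<times> 'n) set \<Rightarrow> ('n::finite) mat \<Rightarrow> real \<Rightarrow> nat \<Rightarrow> 'n mat \<Rightarrow> 'n mat" where
  "odeA Ed W \<epsilon> k E = - Gmat Ed W \<epsilon> k E + finner (Gmat Ed W \<epsilon> k E) E *\<^sub>R E"

definition odeB :: "('n \<times> 'n) set \<Rightarrow> ('n::finite) mat \<Rightarrow> real \<Rightarrow> nat \<Rightarrow> 'n mat \<Rightarrow> 'n mat" where
  "odeB Ed W \<epsilon> k Y =
    (let E = projS Ed Y; P = PY Y (Rmat W \<epsilon> k E)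
     in - P + finner P E *\<^sub>R Y)"

end

theory Submission
  imports Defs
begin

text \<open>A stationary point of (A) satisfies \<open>G = c E\<close> with \<open>c = \<langle>G, E\<rangle> \<noteq> 0\<close>, and a
stationary point of (B) satisfies \<open>P\<^sub>Y R = c Y\<close> with \<open>c \<noteq> 0\<close>. In both directions the
crux is that \<open>R\<close> has the same rank-4 column space as \<open>Y = U S U\<^sup>T\<close>, namely the range of the
orthonormal factor \<open>U\<close>, and \<open>P\<^sub>Y\<close> fixes every matrix whose columns lie there. So
\<open>P\<^sub>Y R = R\<close>, \<open>Y\<close> is a multiple of \<open>R\<close>, and the two stationarity equations translate
into each other via \<open>\<Pi>\<^sub>S R = G\<close> and \<open>\<langle>R, E\<rangle> = \<langle>G, E\<rangle>\<close> for \<open>E\<close> supported on the edge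
set.\<close>

lemma finner_sum: "finner X Y = (\<Sum>i\<in>UNIV. \<Sum>j\<in>UNIV. X $ j $ i * Y $ j $ i)"
  by (simp add: finner_def trace_def matrix_matrix_mult_def transpose_def)

lemma finner_scaleR_left: "finner (c *\<^sub>R X) Y = c * finner X Y"
  by (simp add: finner_sum sum_distrib_left mult.assoc)

lemma finner_projS_left:
  assumes "projS Ed E = E"
  shows "finner (projS Ed X) E = finner X E"
proof -
  have "projS Ed X $ j $ i * E $ j $ i = X $ j $ i * E $ j $ i" for i j
  proof -
    have "E $ j $ i = projS Ed E $ j $ i" using assms by simp
    then show ?thesis by (cases "(j, i) \<in> Ed") (auto simp: projS_def)
  qed
  then show ?thesis by (simp only: finner_sum)
qed

lemma projS_scaleR: "projS Ed (c *\<^sub>R X) = c *\<^sub>R projS Ed X"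
  by (simp add: projS_def vec_eq_iff)

lemma Rmat_symmetric: "transpose (Rmat W \<epsilon> k E) = Rmat W \<epsilon> k E"
  by (simp add: Rmat_def Let_def transpose_def vec_eq_iff algebra_simps)

lemma range_matrix_mult_subset:
  fixes A :: "'a::semiring_1^'n^'m" and B :: "'a^'p^'n"
  shows "range ((*v) (A ** B)) \<subseteq> range ((*v) A)"
  by (auto simp: matrix_vector_mul_assoc[symmetric])

lemma rank_scaleR:
  fixes A :: "real^'n^'m"
  assumes "c \<noteq> 0"
  shows "rank (c *\<^sub>R A) = rank A"
proof -
  have "range ((*v) (c *\<^sub>R A)) = range ((*v) A)"
  proof
    have "(c *\<^sub>R A) *v x = A *v (c *\<^sub>R x)" for x
      by (simp add: matrix_scaleR_vector_ac)
    then show "range ((*v) (c *\<^sub>R A)) \<subseteq> range ((*v) A)"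
      by (metis image_subsetI rangeI)
    have "A *v x = (c *\<^sub>R A) *v ((1/c) *\<^sub>R x)" for x
      using assms by (simp add: matrix_scaleR_vector_ac[symmetric])
    then show "range ((*v) A) \<subseteq> range ((*v) (c *\<^sub>R A))"
      by (metis image_subsetI rangeI)
  qed
  then show ?thesis by (simp add: rank_dim_range)
qed

lemma range_eq_if_subset_rank_le:
  fixes A :: "real^'n^'m" and B :: "real^'p^'m"
  assumes "range ((*v) A) \<subseteq> range ((*v) B)" "rank B \<le> rank A"
  shows "range ((*v) A) = range ((*v) B)"
  using assms by (intro subspace_dim_equal)
    (auto simp: rank_dim_range intro: linear_subspace_image[OF matrix_vector_mul_linear subspace_UNIV])

lemma rank_orthonormal_columns:
  fixes U :: "real^'k^'n"
  assumes "transpose U ** U = mat 1"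
  shows "rank U = CARD('k)"
proof -
  have "inj ((*v) U)"
  proof (rule injI)
    fix x y assume "U *v x = U *v y"
    then have "(transpose U ** U) *v x = (transpose U ** U) *v y"
      by (simp add: matrix_vector_mul_assoc[symmetric])
    then show "x = y" using assms by simp
  qed
  then show ?thesis by (simp add: full_rank_injective)
qed

lemma orthonormal_basis_matrix:
  fixes V :: "(real^'n) set"
  assumes V: "subspace V" "dim V = CARD('k)"
  obtains U :: "real^'k^'n" where "transpose U ** U = mat 1" "range ((*v) U) = V"
proof -
  obtain B where B: "B \<subseteq> V" "pairwise orthogonal B" "\<And>x. x \<in> B \<Longrightarrow> norm x = 1"
     "card B = dim V" "span B = V"
    using orthonormal_basis_subspace[OF V(1)] by metis
  have "finite B" using B(4) V(2) card_ge_0_finite by force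
  moreover have "card (UNIV :: 'k set) = card B" using B(4) V(2) by simp
  ultimately obtain f where f: "bij_betw f (UNIV :: 'k set) B"
    using finite_same_card_bij[OF finite] by blast
  have fB: "f i \<in> B" for i using f by (auto simp: bij_betw_def)
  have f_orthonormal: "inner (f i) (f j) = (if i = j then 1 else 0)" for i j
  proof (cases "i = j")
    case True then show ?thesis using B(3)[OF fB[of i]] by (simp add: norm_eq_1)
  next
    case False
    then have "f i \<noteq> f j" using f by (auto simp: bij_betw_def inj_on_def)
    then have "orthogonal (f i) (f j)" using B(2) fB unfolding pairwise_def by blast
    then show ?thesis using False by (simp add: orthogonal_def)
  qed
  define U :: "real^'k^'n" where "U = (\<chi> i j. f j $ i)"
  have UtU: "transpose U ** U = mat 1"
    using f_orthonormal
    by (simp add: U_def vec_eq_iff matrix_matrix_mult_def transpose_def mat_def inner_vec_def)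
  have "U *v z = (\<Sum>j\<in>UNIV. z $ j *\<^sub>R f j)" for z
    by (simp add: U_def vec_eq_iff matrix_vector_mult_def mult.commute)
  then have "U *v z \<in> span B" for z
    by (simp add: span_sum span_mul span_base fB)
  then have "range ((*v) U) \<subseteq> V" using B(5) by auto
  moreover have "dim V \<le> dim (range ((*v) U))"
    using V(2) rank_orthonormal_columns[OF UtU] by (simp add: rank_dim_range)
  ultimately have "range ((*v) U) = V"
    by (intro subspace_dim_equal V(1) linear_subspace_image[OF matrix_vector_mul_linear subspace_UNIV])
  with UtU that show thesis by blast
qed

lemma projector_fixes_range:
  fixes U :: "real^'k^'n" and A :: "real^'m^'n"
  assumes UtU: "transpose U ** U = mat 1" and "range ((*v) A) \<subseteq> range ((*v) U)"
  shows "U ** transpose U ** A = A"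
  unfolding matrix_eq
proof
  fix x
  obtain z where z: "A *v x = U *v z" using assms(2) by blast
  have "(U ** transpose U ** A) *v x = U *v ((transpose U ** U) *v z)"
    by (simp only: matrix_vector_mul_assoc[symmetric] z)
  then show "(U ** transpose U ** A) *v x = A *v x"
    using UtU z by simp
qed

lemma matrix_diff_rdistrib:
  fixes A B :: "'a::ring_1^'n^'m"
  shows "(A - B) ** C = A ** C - B ** C"
  by (simp add: matrix_matrix_mult_def vec_eq_iff sum_subtractf algebra_simps)

lemma symmetric_rank_factorization:
  fixes Y :: "real^'n^'n"
  assumes sym: "transpose Y = Y" and rk: "rank Y = CARD('k)"
  obtains U :: "real^'k^'n" and S :: "real^'k^'k"
  where "transpose U ** U = mat 1" "transpose S = S" "invertible S" "Y = U ** S ** transpose U"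
proof -
  obtain U :: "real^'k^'n" where U: "transpose U ** U = mat 1" "range ((*v) U) = range ((*v) Y)"
    using orthonormal_basis_matrix[of "range ((*v) Y)"] rk
    by (metis rank_dim_range linear_subspace_image[OF matrix_vector_mul_linear subspace_UNIV])
  have left: "U ** transpose U ** Y = Y"
    using U by (intro projector_fixes_range) auto
  then have right: "Y ** (U ** transpose U) = Y"
    using sym by (metis matrix_transpose_mul transpose_transpose matrix_mul_assoc)
  define S where "S = transpose U ** Y ** U"
  have YS: "Y = U ** S ** transpose U"
    using left right by (simp add: S_def matrix_mul_assoc)
  have "transpose S = S"
    using sym by (simp add: S_def matrix_transpose_mul matrix_mul_assoc)
  moreover have "invertible S"
  proof -
    have "rank Y \<le> rank S"
      using YS rank_mul_le_left rank_mul_le_right order_trans by metis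
    then have "rank S = CARD('k)" using rk rank_bound[of S] by simp
    then show ?thesis
      by (simp add: full_rank_injective invertible_left_inverse matrix_left_invertible_injective)
  qed
  ultimately show thesis using that U(1) YS by blast
qed

lemma PY_eq_tangent_projection:
  fixes Y :: "real^'n^'n"
  assumes "transpose Y = Y" "rank Y = 4"
  obtains U :: "real^4^'n" and S :: "real^4^4" where
    "transpose U ** U = mat 1" "invertible S" "Y = U ** S ** transpose U"
    "\<And>A. PY Y A = A - (mat 1 - U ** transpose U) ** A ** (mat 1 - U ** transpose U)"
proof -
  define U where "U = (SOME U :: real^4^'n. \<exists>S :: real^4^4.
                 transpose U ** U = mat 1 \<and> transpose S = S \<and> invertible S \<and>
                 Y = U ** S ** transpose U)"
  have "\<exists>U :: real^4^'n. \<exists>S :: real^4^4.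
                 transpose U ** U = mat 1 \<and> transpose S = S \<and> invertible S \<and>
                 Y = U ** S ** transpose U"
  proof -
    have "rank Y = CARD(4)" using assms(2) by simp
    then show ?thesis using symmetric_rank_factorization[OF assms(1)] by metis
  qed
  then have "\<exists>S :: real^4^4. transpose U ** U = mat 1 \<and> transpose S = S \<and> invertible S \<and>
                 Y = U ** S ** transpose U"
    unfolding U_def by (rule someI_ex)
  moreover have "PY Y A = A - (mat 1 - U ** transpose U) ** A ** (mat 1 - U ** transpose U)" for A
    by (simp add: PY_def U_def Let_def)
  ultimately show thesis using that by blast
qed

lemma tangent_projection_eq_self:
  fixes U :: "real^'k^'n" and A :: "real^'n^'n"
  assumes "transpose U ** U = mat 1" "range ((*v) A) \<subseteq> range ((*v) U)"
  shows "A - (mat 1 - U ** transpose U) ** A ** (mat 1 - U ** transpose U) = A"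
proof -
  have "(mat 1 - U ** transpose U) ** A = 0"
    using projector_fixes_range[OF assms] by (simp add: matrix_diff_rdistrib)
  then show ?thesis by simp
qed

lemma tangent_projection_mult_basis:
  fixes U :: "real^'k^'n" and A :: "real^'n^'n"
  assumes "transpose U ** U = mat 1"
  shows "(A - (mat 1 - U ** transpose U) ** A ** (mat 1 - U ** transpose U)) ** U = A ** U"
proof -
  have "(mat 1 - U ** transpose U) ** U = 0"
    using assms by (simp add: matrix_diff_rdistrib matrix_mul_assoc[symmetric])
  then show ?thesis by (simp add: matrix_diff_rdistrib matrix_mul_assoc[symmetric])
qed

lemma odeA_stationary_imp_odeB_stationary:
  fixes E :: "real^'n^'n"
  assumes E_supp: "projS Ed E = E" and stat: "odeA Ed W \<epsilon> k E = 0"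
    and G0: "Gmat Ed W \<epsilon> k E \<noteq> 0" and rkR: "rank (Rmat W \<epsilon> k E) = 4"
  shows "\<exists>Y. symm Y \<and> rank Y = 4 \<and> E = projS Ed Y \<and> odeB Ed W \<epsilon> k Y = 0"
proof -
  define R where "R = Rmat W \<epsilon> k E"
  define c where "c = finner (Gmat Ed W \<epsilon> k E) E"
  have G: "Gmat Ed W \<epsilon> k E = c *\<^sub>R E"
    using stat by (simp add: odeA_def c_def add_eq_0_iff)
  then have c0: "c \<noteq> 0" using G0 by auto
  define Y where "Y = (1/c) *\<^sub>R R"
  have RY: "R = c *\<^sub>R Y" using c0 by (simp add: Y_def)
  have symY: "transpose Y = Y" by (simp add: Y_def transpose_scalar R_def Rmat_symmetric)
  have rkY: "rank Y = 4" using c0 rkR by (simp add: Y_def rank_scaleR R_def)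
  have EY: "projS Ed Y = E"
    using c0 G by (simp add: Y_def projS_scaleR R_def Gmat_def[symmetric])
  obtain U :: "real^4^'n" and S where U: "transpose U ** U = mat 1" "Y = U ** S ** transpose U"
    and PY: "\<And>A. PY Y A = A - (mat 1 - U ** transpose U) ** A ** (mat 1 - U ** transpose U)"
    using PY_eq_tangent_projection[OF symY rkY] by metis
  have "R = U ** (c *\<^sub>R (S ** transpose U))"
    by (simp add: RY U(2) matrix_scalar_ac matrix_mul_assoc scalar_matrix_assoc)
  then have "range ((*v) R) \<subseteq> range ((*v) U)"
    by (metis range_matrix_mult_subset)
  then have PR: "PY Y R = R" using PY tangent_projection_eq_self[OF U(1)] by simp
  have "finner R E = c"
    using finner_projS_left[OF E_supp, of R] by (simp add: c_def Gmat_def R_def)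
  then have "odeB Ed W \<epsilon> k Y = - R + c *\<^sub>R Y"
    by (simp add: odeB_def Let_def EY R_def[symmetric] PR)
  also have "\<dots> = 0" by (simp add: RY)
  finally show ?thesis using symY rkY EY by (auto simp: symm_def)
qed

lemma odeB_stationary_imp_odeA_stationary:
  fixes Ed :: "('n::finite \<times> 'n) set" and W Y :: "real^'n^'n" and \<epsilon> :: real and k :: nat
  defines "E \<equiv> projS Ed Y"
  defines "R \<equiv> Rmat W \<epsilon> k E"
  assumes symY: "symm Y" and rkY: "rank Y = 4" and stat: "odeB Ed W \<epsilon> k Y = 0"
    and nE: "fnorm E = 1" and rkR: "rank R = 4" and P0: "PY Y R \<noteq> 0"
  shows "PY Y R = R \<and> (\<exists>c. c \<noteq> 0 \<and> Y = c *\<^sub>R R) \<and> odeA Ed W \<epsilon> k E = 0"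
proof -
  define c where "c = finner (PY Y R) E"
  have P: "PY Y R = c *\<^sub>R Y"
    using stat by (simp add: odeB_def Let_def c_def add_eq_0_iff E_def R_def)
  then have c0: "c \<noteq> 0" using P0 by auto
  obtain U :: "real^4^'n" and S where U: "transpose U ** U = mat 1" "invertible S"
      "Y = U ** S ** transpose U"
    and PY: "\<And>A. PY Y A = A - (mat 1 - U ** transpose U) ** A ** (mat 1 - U ** transpose U)"
    using PY_eq_tangent_projection[OF symY[unfolded symm_def] rkY] by metis
  obtain Si where Si: "S ** Si = mat 1" using U(2) invertible_right_inverse by blast
  \<comment> \<open>\<open>P_Y\<close> does not change \<open>R\<close> on the columns of \<open>U\<close>, so \<open>R U = c Y U = c U S\<close>.\<close>
  have "R ** U = PY Y R ** U"
    using tangent_projection_mult_basis[OF U(1), of R] PY[of R] by simp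
  also have "\<dots> = c *\<^sub>R (U ** S ** (transpose U ** U))"
    unfolding P by (simp add: U(3) scalar_matrix_assoc[symmetric] matrix_mul_assoc)
  also have "\<dots> = c *\<^sub>R (U ** S)" using U(1) by simp
  finally have "R ** U = c *\<^sub>R (U ** S)" .
  then have "U = R ** ((1/c) *\<^sub>R (U ** Si))"
    using c0 by (simp add: matrix_scalar_ac matrix_mul_assoc scalar_matrix_assoc[symmetric])
      (simp add: matrix_mul_assoc[symmetric] Si)
  then have "range ((*v) U) \<subseteq> range ((*v) R)"
    by (metis range_matrix_mult_subset)
  then have "range ((*v) U) = range ((*v) R)"
    using rkR rank_orthonormal_columns[OF U(1)] by (intro range_eq_if_subset_rank_le) simp_all
  then have "range ((*v) R) \<subseteq> range ((*v) U)" by simp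
  then have PR: "PY Y R = R" using PY tangent_projection_eq_self[OF U(1)] by simp
  then have RY: "R = c *\<^sub>R Y" using P by simp
  then have YR: "Y = (1/c) *\<^sub>R R" using c0 by simp
  have "Gmat Ed W \<epsilon> k E = projS Ed R" by (simp add: Gmat_def R_def)
  also have "\<dots> = c *\<^sub>R E" by (simp add: RY projS_scaleR E_def)
  finally have "Gmat Ed W \<epsilon> k E = c *\<^sub>R E" .
  moreover have "finner E E = 1" using nE by (simp add: fnorm_def)
  ultimately have "odeA Ed W \<epsilon> k E = 0"
    by (simp add: odeA_def finner_scaleR_left)
  moreover have "1/c \<noteq> 0" using c0 by simp
  ultimately show ?thesis using PR YR by blast
qed

theorem theorem4p3:
  fixes Ed :: "('n::finite \<times> 'n) set"
    and W :: "real^'n^'n"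
    and \<epsilon> :: real
    and k :: nat
  assumes Ed_sym: "\<And>i j. (i, j) \<in> Ed \<Longrightarrow> (j, i) \<in> Ed"
    and W_sym: "transpose W = W"
    and W_nonneg: "\<And>i j. W $ i $ j \<ge> 0"
    and W_supp: "\<And>i j. (i, j) \<notin> Ed \<Longrightarrow> W $ i $ j = 0"
    and k_range: "2 \<le> k" "k \<le> CARD('n) - 1"
    and eps_pos: "\<epsilon> > 0"
  shows
   "(\<forall>E :: real^'n^'n.
       (projS Ed E = E \<and> symm E \<and> fnorm E = 1 \<and>
        odeA Ed W \<epsilon> k E = 0 \<and>
        simple_eig (lap (W + \<epsilon> *\<^sub>R E)) k \<and> simple_eig (lap (W + \<epsilon> *\<^sub>R E)) (k + 1) \<and>
        Gmat Ed W \<epsilon> k E \<noteq> 0 \<and> rank (Rmat W \<epsilon> k E) = 4)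
       \<longrightarrow> (\<exists>Y :: real^'n^'n. symm Y \<and> rank Y = 4 \<and> E = projS Ed Y \<and>
                              odeB Ed W \<epsilon> k Y = 0))
    \<and>
    (\<forall>Y :: real^'n^'n.
       (let E = projS Ed Y; R = Rmat W \<epsilon> k E in
        (symm Y \<and> rank Y = 4 \<and> odeB Ed W \<epsilon> k Y = 0 \<and> fnorm E = 1 \<and>
         simple_eig (lap (W + \<epsilon> *\<^sub>R E)) k \<and> simple_eig (lap (W + \<epsilon> *\<^sub>R E)) (k + 1) \<and>
         rank R = 4 \<and> PY Y R \<noteq> 0)
        \<longrightarrow> (PY Y R = R \<and> (\<exists>c::real. c \<noteq> 0 \<and> Y = c *\<^sub>R R) \<and> odeA Ed W \<epsilon> k E = 0)))"
  unfolding Let_def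
proof (rule conjI; intro allI impI; elim conjE)
  fix E :: "real^'n^'n"
  assume "projS Ed E = E" "odeA Ed W \<epsilon> k E = 0" "Gmat Ed W \<epsilon> k E \<noteq> 0"
    "rank (Rmat W \<epsilon> k E) = 4"
  then show "\<exists>Y. symm Y \<and> rank Y = 4 \<and> E = projS Ed Y \<and> odeB Ed W \<epsilon> k Y = 0"
    by (rule odeA_stationary_imp_odeB_stationary)
next
  fix Y :: "real^'n^'n"
  assume "symm Y" "rank Y = 4" "odeB Ed W \<epsilon> k Y = 0" "fnorm (projS Ed Y) = 1"
    "rank (Rmat W \<epsilon> k (projS Ed Y)) = 4" "PY Y (Rmat W \<epsilon> k (projS Ed Y)) \<noteq> 0"
  then show "PY Y (Rmat W \<epsilon> k (projS Ed Y)) = Rmat W \<epsilon> k (projS Ed Y) \<and>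
      (\<exists>c. c \<noteq> 0 \<and> Y = c *\<^sub>R Rmat W \<epsilon> k (projS Ed Y)) \<and> odeA Ed W \<epsilon> k (projS Ed Y) = 0"
    by (rule odeB_stationary_imp_odeA_stationary)
qed

end
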